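(* Let $S,T$ be disjoint finite sets with a total order $\prec$ on $S\cup T$ in which every element of $S$ precedes every element of $T$. Let $R\subseteq S\times T$ be a relation such that if $(s,t)\in R$, then $(s',t')\in R$ for all $s'\in S,t'\in T$ with $s\preceq s'\prec t'\preceq t$. Let $y:R\to\mathbb{R}_{\ge0}$ with $\gamma:=\sum_{(s,t)\in R}y_{s,t}>0$. Define $$s^*=\max_{\prec}\Big\{s\in S:\ \sum_{s'\succeq s}\ \sum_{t:(s',t)\in R}y_{s',t}\ge \gamma/2\Big\},\qquad t^*=\min_{\prec}\Big\{t\in T:\ \sum_{t'\preceq t}\ \sum_{s:(s,t')\in R}y_{s,t'}\ge\gamma/2\Big\},$$ and $\tilde S=\{s\in S: s\succeq s^*\}$, $\tilde T=\{t\in T: t\preceq t^*\}$. Then $\tilde S\times\tilde T\subseteq R$.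
   Context: $\preceq$ denotes the reflexive version of the total order $\prec$; $\max_\prec$ and $\min_\prec$ denote the largest and smallest element with respect to $\prec$. *)

theory Defs
  imports Complex_Main
begin

end

theory Submission
  imports Defs
begin

text \<open>The weight of \<open>R\<close> splits into the part strictly after \<open>s\<^sup>*\<close> in the first coordinate and
  the part strictly before \<open>t\<^sup>*\<close> in the second; by the choice of \<open>s\<^sup>*\<close> and \<open>t\<^sup>*\<close> each has weight
  less than \<open>\<gamma>/2\<close>. If \<open>(s\<^sup>*, t\<^sup>*) \<notin> R\<close>, the closure property of \<open>R\<close> makes these two parts cover
  \<open>R\<close>, so \<open>\<gamma> < \<gamma>\<close>. Hence \<open>(s\<^sup>*, t\<^sup>*) \<in> R\<close>, and closure again yields the whole rectangle.\<close>

lemma sum_row_sums_eq: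
  fixes y :: "'a \<times> 'b \<Rightarrow> 'c::comm_monoid_add"
  assumes "finite R" "finite U"
  shows "(\<Sum>s\<in>U. \<Sum>t\<in>{t. (s, t) \<in> R}. y (s, t)) = (\<Sum>p\<in>{p\<in>R. fst p \<in> U}. y p)"
proof -
  have "{p\<in>R. fst p \<in> U} = Sigma U (\<lambda>s. {t. (s, t) \<in> R})" by auto
  moreover have "finite {t. (s, t) \<in> R}" for s
    using finite_imageI[OF \<open>finite R\<close>, of snd] by (rule finite_subset[rotated]) force
  ultimately show ?thesis
    using sum.Sigma[OF \<open>finite U\<close>, of "\<lambda>s. {t. (s, t) \<in> R}" "\<lambda>s t. y (s, t)"]
    by (simp add: case_prod_beta')
qed

lemma sum_column_sums_eq:
  fixes y :: "'a \<times> 'b \<Rightarrow> 'c::comm_monoid_add"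
  assumes "finite R" "finite U"
  shows "(\<Sum>t\<in>U. \<Sum>s\<in>{s. (s, t) \<in> R}. y (s, t)) = (\<Sum>p\<in>{p\<in>R. snd p \<in> U}. y p)"
proof -
  have "(\<Sum>t\<in>U. \<Sum>s\<in>{s. (s, t) \<in> R}. y (s, t))
      = (\<Sum>t\<in>U. \<Sum>s\<in>{s. (t, s) \<in> prod.swap ` R}. (y \<circ> prod.swap) (t, s))"
    by (intro sum.cong) (auto simp: image_iff intro!: bexI[where x="(_, _)"])
  also have "\<dots> = (\<Sum>p\<in>{p\<in>prod.swap ` R. fst p \<in> U}. (y \<circ> prod.swap) p)"
    using assms by (intro sum_row_sums_eq) simp_all
  also have "{p\<in>prod.swap ` R. fst p \<in> U} = prod.swap ` {p\<in>R. snd p \<in> U}" by force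
  also have "(\<Sum>p\<in>prod.swap ` {p\<in>R. snd p \<in> U}. (y \<circ> prod.swap) p) = (\<Sum>p\<in>{p\<in>R. snd p \<in> U}. y p)"
    by (subst sum.reindex) (auto simp: inj_on_def)
  finally show ?thesis .
qed

lemma strict_upper_set_eq_upper_set:
  fixes S :: "'a::linorder set"
  assumes "finite S" "s \<in> S" "x < s"
  obtains s1 where "s1 \<in> S" "x < s1" "{s'\<in>S. s1 \<le> s'} = {s'\<in>S. x < s'}"
proof
  let ?A = "{s'\<in>S. x < s'}"
  have "finite ?A" "?A \<noteq> {}" using assms by auto
  then show "Min ?A \<in> S" "x < Min ?A" using Min_in by auto
  then show "{s'\<in>S. Min ?A \<le> s'} = ?A" using \<open>finite ?A\<close> by fastforce
qed

lemma strict_lower_set_eq_lower_set: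
  fixes T :: "'a::linorder set"
  assumes "finite T" "t \<in> T" "t < x"
  obtains t1 where "t1 \<in> T" "t1 < x" "{t'\<in>T. t' \<le> t1} = {t'\<in>T. t' < x}"
proof
  let ?A = "{t'\<in>T. t' < x}"
  have "finite ?A" "?A \<noteq> {}" using assms by auto
  then show "Max ?A \<in> T" "Max ?A < x" using Max_in by auto
  then show "{t'\<in>T. t' \<le> Max ?A} = ?A" using \<open>finite ?A\<close> by fastforce
qed

lemma below_threshold_beyond_Max:
  fixes G :: "'a::linorder set \<Rightarrow> 'b::linorder"
  assumes "finite S" "G {} < c"
  shows "G {s\<in>S. Max {s\<in>S. c \<le> G {s'\<in>S. s \<le> s'}} < s} < c"
proof -
  let ?A = "{s\<in>S. c \<le> G {s'\<in>S. s \<le> s'}}"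
  show ?thesis
  proof (cases "\<exists>s\<in>S. Max ?A < s")
    case False
    then have "{s\<in>S. Max ?A < s} = {}" by blast
    then show ?thesis using assms(2) by (simp only:)
  next
    case True
    then obtain s where "s \<in> S" "Max ?A < s" by blast
    then obtain s1 where s1: "s1 \<in> S" "Max ?A < s1" "{s'\<in>S. s1 \<le> s'} = {s'\<in>S. Max ?A < s'}"
      by (rule strict_upper_set_eq_upper_set[OF \<open>finite S\<close>])
    have "s1 \<notin> ?A"
    proof
      assume "s1 \<in> ?A"
      then have "s1 \<le> Max ?A" using \<open>finite S\<close> by (intro Max_ge) simp_all
      with s1(2) show False by simp
    qed
    with s1(1) have "\<not> c \<le> G {s'\<in>S. s1 \<le> s'}" by blast
    then show ?thesis unfolding s1(3) by (simp only: not_le)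
  qed
qed

lemma below_threshold_before_Min:
  fixes G :: "'a::linorder set \<Rightarrow> 'b::linorder"
  assumes "finite T" "G {} < c"
  shows "G {t\<in>T. t < Min {t\<in>T. c \<le> G {t'\<in>T. t' \<le> t}}} < c"
proof -
  let ?A = "{t\<in>T. c \<le> G {t'\<in>T. t' \<le> t}}"
  show ?thesis
  proof (cases "\<exists>t\<in>T. t < Min ?A")
    case False
    then have "{t\<in>T. t < Min ?A} = {}" by blast
    then show ?thesis using assms(2) by (simp only:)
  next
    case True
    then obtain t where "t \<in> T" "t < Min ?A" by blast
    then obtain t1 where t1: "t1 \<in> T" "t1 < Min ?A" "{t'\<in>T. t' \<le> t1} = {t'\<in>T. t' < Min ?A}"
      by (rule strict_lower_set_eq_lower_set[OF \<open>finite T\<close>])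
    have "t1 \<notin> ?A"
    proof
      assume "t1 \<in> ?A"
      then have "Min ?A \<le> t1" using \<open>finite T\<close> by (intro Min_le) simp_all
      with t1(2) show False by simp
    qed
    with t1(1) have "\<not> c \<le> G {t'\<in>T. t' \<le> t1}" by blast
    then show ?thesis unfolding t1(3) by (simp only: not_le)
  qed
qed

lemma Max_threshold_in:
  fixes G :: "'a::linorder set \<Rightarrow> 'b::linorder"
  assumes "finite S" "S \<noteq> {}" "c \<le> G S"
  shows "Max {s\<in>S. c \<le> G {s'\<in>S. s \<le> s'}} \<in> S"
proof -
  have "{s'\<in>S. Min S \<le> s'} = S" using assms(1) by auto
  then have "Min S \<in> {s\<in>S. c \<le> G {s'\<in>S. s \<le> s'}}" using assms by simp
  then show ?thesis using Max_in[of "{s\<in>S. c \<le> G {s'\<in>S. s \<le> s'}}"] assms(1) by auto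
qed

lemma Min_threshold_in:
  fixes G :: "'a::linorder set \<Rightarrow> 'b::linorder"
  assumes "finite T" "T \<noteq> {}" "c \<le> G T"
  shows "Min {t\<in>T. c \<le> G {t'\<in>T. t' \<le> t}} \<in> T"
proof -
  have "{t'\<in>T. t' \<le> Max T} = T" using assms(1) by auto
  then have "Max T \<in> {t\<in>T. c \<le> G {t'\<in>T. t' \<le> t}}" using assms by simp
  then show ?thesis using Min_in[of "{t\<in>T. c \<le> G {t'\<in>T. t' \<le> t}}"] assms(1) by auto
qed

lemma corner_mem_if_margins_light:
  fixes R :: "('a::linorder \<times> 'a) set" and y :: "'a \<times> 'a \<Rightarrow> real"
  assumes "finite R" and "\<forall>p\<in>R. y p \<ge> 0"
    and closed: "\<And>s t. (s, t) \<in> R \<Longrightarrow> s \<le> s0 \<Longrightarrow> t0 \<le> t \<Longrightarrow> (s0, t0) \<in> R"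
    and "(\<Sum>p\<in>{p\<in>R. s0 < fst p}. y p) < (\<Sum>p\<in>R. y p) / 2"
    and "(\<Sum>p\<in>{p\<in>R. snd p < t0}. y p) < (\<Sum>p\<in>R. y p) / 2"
  shows "(s0, t0) \<in> R"
proof (rule ccontr)
  let ?A = "{p\<in>R. s0 < fst p}" and ?B = "{p\<in>R. snd p < t0}"
  assume "(s0, t0) \<notin> R"
  then have "R = ?A \<union> ?B" using closed by (force simp: not_less)
  then have "(\<Sum>p\<in>R. y p) = (\<Sum>p\<in>?A. y p) + (\<Sum>p\<in>?B. y p) - (\<Sum>p\<in>?A \<inter> ?B. y p)"
    using sum_Un[of ?A ?B y] \<open>finite R\<close> by simp
  moreover have "(\<Sum>p\<in>?A \<inter> ?B. y p) \<ge> 0" using assms(2) by (intro sum_nonneg) auto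
  ultimately show False using assms(4,5) by linarith
qed

theorem lemmaB2:
  fixes S T :: "'a::linorder set" and R :: "('a \<times> 'a) set" and y :: "'a \<times> 'a \<Rightarrow> real"
    and \<gamma> :: real and sstar tstar :: 'a
  assumes finS: "finite S" and finT: "finite T"
    and disj: "S \<inter> T = {}"
    and ST: "\<forall>s\<in>S. \<forall>t\<in>T. s < t"
    and RST: "R \<subseteq> S \<times> T"
    and Rclosed: "\<And>s t s' t'. (s, t) \<in> R \<Longrightarrow> s' \<in> S \<Longrightarrow> t' \<in> T \<Longrightarrow>
                   s \<le> s' \<Longrightarrow> s' < t' \<Longrightarrow> t' \<le> t \<Longrightarrow> (s', t') \<in> R"
    and ynonneg: "\<forall>p\<in>R. y p \<ge> 0"
    and gamma_def: "\<gamma> = (\<Sum>p\<in>R. y p)"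
    and gamma_pos: "\<gamma> > 0"
    and sstar_def: "sstar = Max {s \<in> S. (\<Sum>s'\<in>{s'\<in>S. s' \<ge> s}. \<Sum>t\<in>{t. (s', t) \<in> R}. y (s', t)) \<ge> \<gamma> / 2}"
    and tstar_def: "tstar = Min {t \<in> T. (\<Sum>t'\<in>{t'\<in>T. t' \<le> t}. \<Sum>s\<in>{s. (s, t') \<in> R}. y (s, t')) \<ge> \<gamma> / 2}"
  shows "{s \<in> S. s \<ge> sstar} \<times> {t \<in> T. t \<le> tstar} \<subseteq> R"
proof -
  let ?row = "\<lambda>U. \<Sum>s'\<in>U. \<Sum>t\<in>{t. (s', t) \<in> R}. y (s', t)"
  let ?col = "\<lambda>V. \<Sum>t'\<in>V. \<Sum>s\<in>{s. (s, t') \<in> R}. y (s, t')"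
  have finR: "finite R" using RST finS finT by (meson finite_SigmaI finite_subset)
  have row: "?row {s\<in>S. P s} = (\<Sum>p\<in>{p\<in>R. P (fst p)}. y p)"
    and col: "?col {t\<in>T. P t} = (\<Sum>p\<in>{p\<in>R. P (snd p)}. y p)" for P
    using sum_row_sums_eq[OF finR, of "{s\<in>S. P s}" y] sum_column_sums_eq[OF finR, of "{t\<in>T. P t}" y]
      finS finT RST by (auto intro!: arg_cong[where f="sum y"])
  have "R \<noteq> {}" using gamma_pos gamma_def by auto
  then have "S \<noteq> {}" "T \<noteq> {}" using RST by auto
  moreover have "?row S = \<gamma>" "?col T = \<gamma>"
    using row[of "\<lambda>_. True"] col[of "\<lambda>_. True"] gamma_def by simp_all
  ultimately have sS: "sstar \<in> S" and tT: "tstar \<in> T"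
    unfolding sstar_def tstar_def using finS finT gamma_pos
    by (auto intro!: Max_threshold_in Min_threshold_in)
  have "(\<Sum>p\<in>{p\<in>R. sstar < fst p}. y p) < \<gamma> / 2"
    using below_threshold_beyond_Max[OF finS, of ?row "\<gamma> / 2"] row[of "\<lambda>s. sstar < s"] gamma_pos
    unfolding sstar_def by simp
  moreover have "(\<Sum>p\<in>{p\<in>R. snd p < tstar}. y p) < \<gamma> / 2"
    using below_threshold_before_Min[OF finT, of ?col "\<gamma> / 2"] col[of "\<lambda>t. t < tstar"] gamma_pos
    unfolding tstar_def by simp
  ultimately have "(sstar, tstar) \<in> R"
    using corner_mem_if_margins_light[OF finR ynonneg] Rclosed[of _ _ sstar tstar] sS tT ST gamma_def
    by auto
  then show ?thesis using Rclosed ST by auto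
qed

end
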